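(* Let $b_n$ denote the number of rooted indecomposable chord diagrams of size $n$ and $g_n$ the number of rooted combinatorial maps of size $n$. Then $b_1=g_1=1$ and for all $n\ge 2$, $$b_n=\sum_{k=1}^{n-1}b_k\,b_{n-k}+(2n-3)\,b_{n-1},\qquad g_n=\sum_{k=1}^{n-1}g_k\,g_{n-k}+(2n-3)\,g_{n-1}.$$
   Context: A rooted chord diagram of size $n$ is (up to isomorphism) a perfect matching of $\{0<1<\dots<2n-1\}$ into $n$ pairs $(a,b)$ with $a<b$ (chords). The concatenation $C_1C_2$ of diagrams of sizes $n_1,n_2$ is the diagram of size $n_1+n_2$ whose matching is $C_1$ on the first $2n_1$ points and (a shifted copy of) $C_2$ on the last $2n_2$ points. A diagram is indecomposable if it is not the concatenation of two (nonempty) diagrams. A rooted combinatorial map is $(H,\sigma,\alpha,r)$ with $H$ a finite set, $\sigma$ a permutation and $\alpha$ an involution of $H$, $r\in H$ with $\alpha(r)=r$, and $\langle\sigma,\alpha\rangle$ transitive on $H$; it is closed ($r$ is the only fixed point of $\alpha$), and maps are counted up to root-preserving isomorphism. Its size is the number of $\alpha$-orbits (edges), the root $\{r\}$ counting as an edge; the one-half-edge map has size 1. *)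

theory Defs
  imports "HOL-Combinatorics.Permutations"
begin

text \<open>A chord diagram of size n is a perfect matching of the points 0 < 1 < ... < 2n-1,
  encoded as a fixed-point-free involution f of {0..<2n} (and f x = x outside).
  Isomorphisms must preserve the linear order of the points, hence are trivial, so
  isomorphism classes of diagrams are exactly these matchings.\<close>

definition chord_diagram :: "nat \<Rightarrow> (nat \<Rightarrow> nat) \<Rightarrow> bool" where
  "chord_diagram n f \<longleftrightarrow>
     (\<forall>x<2*n. f x < 2*n \<and> f x \<noteq> x \<and> f (f x) = x) \<and> (\<forall>x. 2*n \<le> x \<longrightarrow> f x = x)"

definition concat_diagram :: "nat \<Rightarrow> (nat \<Rightarrow> nat) \<Rightarrow> nat \<Rightarrow> (nat \<Rightarrow> nat) \<Rightarrow> (nat \<Rightarrow> nat)" where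
  "concat_diagram n1 f1 n2 f2 = (\<lambda>x. if x < 2*n1 then f1 x
        else if x < 2*(n1+n2) then f2 (x - 2*n1) + 2*n1 else x)"

definition indecomposable :: "nat \<Rightarrow> (nat \<Rightarrow> nat) \<Rightarrow> bool" where
  "indecomposable n f \<longleftrightarrow>
     \<not> (\<exists>n1 n2 f1 f2. 0 < n1 \<and> 0 < n2 \<and> n1 + n2 = n \<and> chord_diagram n1 f1 \<and>
           chord_diagram n2 f2 \<and> f = concat_diagram n1 f1 n2 f2)"

definition b_count :: "nat \<Rightarrow> nat" where
  "b_count n = card {f. chord_diagram n f \<and> indecomposable n f}"

text \<open>A rooted map is represented on the canonical carrier H = {0..<m} with root r = 0;
  a triple (m, \<sigma>, \<alpha>).\<close>

definition rooted_map :: "nat \<times> (nat \<Rightarrow> nat) \<times> (nat \<Rightarrow> nat) \<Rightarrow> bool" where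
  "rooted_map M = (case M of (m, \<sigma>, \<alpha>) \<Rightarrow>
     0 < m \<and> \<sigma> permutes {0..<m} \<and> \<alpha> permutes {0..<m} \<and> (\<forall>x<m. \<alpha> (\<alpha> x) = x) \<and>
     \<alpha> 0 = 0 \<and>
     (\<forall>x<m. \<forall>y<m. (x, y) \<in>
        ({(z, \<sigma> z) | z. z < m} \<union> {(\<sigma> z, z) | z. z < m} \<union> {(z, \<alpha> z) | z. z < m})\<^sup>*))"

definition closed_map :: "nat \<times> (nat \<Rightarrow> nat) \<times> (nat \<Rightarrow> nat) \<Rightarrow> bool" where
  "closed_map M = (case M of (m, \<sigma>, \<alpha>) \<Rightarrow> (\<forall>x<m. \<alpha> x = x \<longleftrightarrow> x = 0))"

text \<open>Size = number of \<alpha>-orbits (the root counts as an edge).\<close>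
definition map_size :: "nat \<times> (nat \<Rightarrow> nat) \<times> (nat \<Rightarrow> nat) \<Rightarrow> nat" where
  "map_size M = (case M of (m, \<sigma>, \<alpha>) \<Rightarrow> card {{x, \<alpha> x} | x. x < m})"

definition map_iso :: "nat \<times> (nat \<Rightarrow> nat) \<times> (nat \<Rightarrow> nat) \<Rightarrow> nat \<times> (nat \<Rightarrow> nat) \<times> (nat \<Rightarrow> nat) \<Rightarrow> bool" where
  "map_iso M M' = (case M of (m, \<sigma>, \<alpha>) \<Rightarrow> case M' of (m', \<sigma>', \<alpha>') \<Rightarrow>
     m = m' \<and> (\<exists>\<phi>. \<phi> permutes {0..<m} \<and> \<phi> 0 = 0 \<and>
        (\<forall>x<m. \<phi> (\<sigma> x) = \<sigma>' (\<phi> x) \<and> \<phi> (\<alpha> x) = \<alpha>' (\<phi> x))))"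

definition closed_maps_of_size :: "nat \<Rightarrow> (nat \<times> (nat \<Rightarrow> nat) \<times> (nat \<Rightarrow> nat)) set" where
  "closed_maps_of_size n = {M. rooted_map M \<and> closed_map M \<and> map_size M = n}"

definition g_count :: "nat \<Rightarrow> nat" where
  "g_count n = card (closed_maps_of_size n //
      {(M, M'). M \<in> closed_maps_of_size n \<and> M' \<in> closed_maps_of_size n \<and> map_iso M M'})"

end

theory Submission
  imports Defs "HOL-Computational_Algebra.Formal_Power_Series"
begin

text \<open>Both sequences satisfy \<open>(2n-1)!! = (\<Sum>k=1..n. a\<^sub>k (2(n-k)-1)!!)\<close>. Here
  \<open>(2n-1)!!\<close> counts all chord diagrams of size \<open>n\<close>, and \<open>(2n-2)! (2n-1)!!\<close> counts all
  labelled rooted premaps on \<open>2n-1\<close> half-edges. A chord diagram splits uniquely into its first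
  indecomposable block followed by an arbitrary diagram. A labelled rooted premap splits uniquely
  into the connected component of the root, which is a labelled rooted map, and an arbitrary
  premap on the remaining half-edges; since an automorphism fixing the root of a connected map is
  trivial, every rooted map of size \<open>k\<close> has exactly \<open>(2k-2)!\<close> labellings. In generating
  functions, \<open>D = \<Sum> (2n-1)!! x\<^sup>n\<close> satisfies \<open>D = 1 + B D\<close> and \<open>D = 1 + x D + 2 x\<^sup>2 D'\<close>;
  eliminating \<open>D\<close> gives \<open>B = x + B\<^sup>2 + 2 x\<^sup>2 B' - x B\<close>, which is the recurrence
  coefficientwise.\<close>

fun odd_dfact :: "nat \<Rightarrow> nat" where
  "odd_dfact 0 = 1"
| "odd_dfact (Suc n) = (2*n+1) * odd_dfact n"

lemma odd_dfact_pos: "odd_dfact n > 0"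
  by (induction n) auto

section \<open>Perfect matchings\<close>

definition perfect_matchings :: "'a set \<Rightarrow> ('a \<Rightarrow> 'a) set" where
  "perfect_matchings B =
     {f. (\<forall>x\<in>B. f x \<in> B \<and> f x \<noteq> x \<and> f (f x) = x) \<and> (\<forall>x. x \<notin> B \<longrightarrow> f x = x)}"

definition matching_count :: "nat \<Rightarrow> nat" where
  "matching_count n = (if even n then odd_dfact (n div 2) else 0)"

lemma matching_count_rec:
  assumes "0 < n"
  shows "matching_count n = (n - 1) * matching_count (n - 2)"
proof -
  obtain m where n: "n = Suc m" using assms gr0_implies_Suc by blast
  show ?thesis by (cases m) (auto simp: n matching_count_def elim!: evenE)
qed

lemma perfect_matching_involution: "f \<in> perfect_matchings B \<Longrightarrow> f (f x) = x"
  unfolding perfect_matchings_def by (cases "x \<in> B") auto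

lemma perfect_matching_permutes:
  assumes "f \<in> perfect_matchings B"
  shows "f permutes B"
  unfolding permutes_def
proof (intro conjI allI impI)
  show "f x = x" if "x \<notin> B" for x
    using assms that by (auto simp: perfect_matchings_def)
  show "\<exists>!x. f x = y" for y
    by (rule ex1I[of _ "f y"]) (metis assms perfect_matching_involution)+
qed

lemma finite_perfect_matchings: "finite B \<Longrightarrow> finite (perfect_matchings B)"
  by (rule finite_subset[OF _ finite_permutations[of B]]) (auto dest: perfect_matching_permutes)

lemma perfect_matchings_empty: "perfect_matchings {} = {id}"
  by (auto simp: perfect_matchings_def fun_eq_iff)

lemma perfect_matchings_by_partner:
  assumes b: "b \<in> B"
  shows "perfect_matchings B =
    (\<lambda>(c, g). g(b := c, c := b)) ` (SIGMA c:B-{b}. perfect_matchings (B - {b, c}))"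
proof (intro equalityI subsetI)
  fix f assume f: "f \<in> perfect_matchings B"
  then have fB: "\<forall>x\<in>B. f x \<in> B \<and> f x \<noteq> x \<and> f (f x) = x" "\<forall>x. x \<notin> B \<longrightarrow> f x = x"
    by (auto simp: perfect_matchings_def)
  define g where "g = f(b := b, f b := f b)"
  have "g \<in> perfect_matchings (B - {b, f b})"
    unfolding perfect_matchings_def g_def using fB b by auto metis+
  moreover have "f = g(b := f b, f b := b)"
    using fB b by (auto simp: g_def fun_eq_iff)
  ultimately show "f \<in> (\<lambda>(c, g). g(b := c, c := b)) ` (SIGMA c:B-{b}. perfect_matchings (B - {b, c}))"
    using fB b by (intro image_eqI[of _ _ "(f b, g)"]) auto
next
  fix f assume "f \<in> (\<lambda>(c, g). g(b := c, c := b)) ` (SIGMA c:B-{b}. perfect_matchings (B - {b, c}))"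
  then obtain c g where "c \<in> B - {b}" "g \<in> perfect_matchings (B - {b, c})" "f = g(b := c, c := b)"
    by auto
  then show "f \<in> perfect_matchings B"
    using b unfolding perfect_matchings_def by auto
qed

lemma inj_on_match_partner:
  "inj_on (\<lambda>(c, g). g(b := c, c := b)) (SIGMA c:B-{b}. perfect_matchings (B - {b, c}))"
proof (rule inj_onI)
  fix p q
  assume "p \<in> (SIGMA c:B-{b}. perfect_matchings (B - {b, c}))"
    and "q \<in> (SIGMA c:B-{b}. perfect_matchings (B - {b, c}))"
    and e: "(\<lambda>(c, g). g(b := c, c := b)) p = (\<lambda>(c, g). g(b := c, c := b)) q"
  then obtain c g c' g' where pq: "p = (c, g)" "q = (c', g')"
    and c: "c \<in> B - {b}" "g \<in> perfect_matchings (B - {b, c})"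
    and c': "c' \<in> B - {b}" "g' \<in> perfect_matchings (B - {b, c'})"
    by auto
  have "c = c'" using fun_cong[OF e, of b] pq c c' by auto
  moreover have "g x = g' x" for x
    using fun_cong[OF e, of x] pq c c' \<open>c = c'\<close> unfolding perfect_matchings_def
    by (cases "x = b \<or> x = c") auto
  ultimately show "p = q" using pq by auto
qed

lemma card_perfect_matchings:
  "finite B \<Longrightarrow> card (perfect_matchings B) = matching_count (card B)"
proof (induction "card B" arbitrary: B rule: less_induct)
  case less
  show ?case
  proof (cases "B = {}")
    case True
    then show ?thesis by (simp add: perfect_matchings_empty matching_count_def)
  next
    case False
    then obtain b where b: "b \<in> B" by auto
    have IH: "card (perfect_matchings (B - {b, c})) = matching_count (card B - 2)"
      if "c \<in> B - {b}" for c
    proof -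
      have "card (B - {b, c}) = card B - 2"
        using less.prems that b by (auto simp: card_Diff_subset)
      moreover have "card B - 2 < card B"
        using less.prems b card_gt_0_iff[of B] by (metis diff_less empty_iff zero_less_numeral)
      ultimately show ?thesis using less.hyps less.prems by simp
    qed
    have "card (perfect_matchings B) = card (SIGMA c:B-{b}. perfect_matchings (B - {b, c}))"
      using perfect_matchings_by_partner[OF b] card_image[OF inj_on_match_partner] by simp
    also have "\<dots> = (\<Sum>c\<in>B-{b}. card (perfect_matchings (B - {b, c})))"
      using less.prems by (intro card_SigmaI) (auto intro: finite_perfect_matchings)
    also have "\<dots> = (card B - 1) * matching_count (card B - 2)"
      using IH less.prems b by simp
    also have "\<dots> = matching_count (card B)"
      using less.prems b by (subst matching_count_rec) (auto simp: card_gt_0_iff)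
    finally show ?thesis .
  qed
qed

lemma card_matched_pairs:
  assumes "finite B" "f \<in> perfect_matchings B"
  shows "2 * card {{x, f x} | x. x \<in> B} = card B"
proof -
  let ?P = "{{x, f x} | x. x \<in> B}"
  have f: "\<forall>x\<in>B. f x \<in> B \<and> f x \<noteq> x \<and> f (f x) = x"
    using assms(2) by (auto simp: perfect_matchings_def)
  have union: "\<Union>?P = B" using f by blast
  have "2 * card ?P = card (\<Union>?P)"
  proof (rule card_partition)
    show "finite ?P" "finite (\<Union>?P)" using assms(1) union by simp_all
    show "card c = 2" if "c \<in> ?P" for c using that f by fastforce
    show "c1 \<inter> c2 = {}" if "c1 \<in> ?P" "c2 \<in> ?P" "c1 \<noteq> c2" for c1 c2
      using that f
      by (smt (verit, best) disjoint_iff_not_equal insertE insert_commute mem_Collect_eq singleton_iff)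
  qed
  then show ?thesis using union by simp
qed

section \<open>From a convolution identity to the recurrence\<close>

unbundle fps_syntax

lemma fps_odd_dfact_ode:
  defines "D \<equiv> Abs_fps (\<lambda>n. of_nat (odd_dfact n)) :: 'a::comm_ring_1 fps"
  shows "D = 1 + fps_X * D + 2 * fps_X^2 * fps_deriv D"
proof (rule fps_ext)
  fix n
  have deriv_term: "(2 * fps_X^2 * fps_deriv D) $ n = 2 * (fps_X^2 * fps_deriv D) $ n"
    by (simp add: mult.assoc numeral_fps_const)
  show "D $ n = (1 + fps_X * D + 2 * fps_X^2 * fps_deriv D) $ n"
  proof (cases n)
    case (Suc m)
    then show ?thesis
      using deriv_term by (cases m) (auto simp: D_def fps_X_power_mult_nth algebra_simps)
  qed (simp add: D_def)
qed

lemma fps_riccati_of_convolution: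
  fixes B D :: "'a::idom fps"
  assumes DB: "D = 1 + B * D"
    and ode: "D = 1 + fps_X * D + 2 * fps_X^2 * fps_deriv D"
    and "D \<noteq> 0"
  shows "B = fps_X + B^2 + 2 * fps_X^2 * fps_deriv B - fps_X * B"
proof -
  have BD: "B * D = D - 1" using DB by (simp add: algebra_simps)
  have "fps_deriv D = fps_deriv B * D + B * fps_deriv D"
    using arg_cong[OF DB, of fps_deriv] by (simp add: algebra_simps)
  then have dB: "fps_deriv B * D = fps_deriv D - B * fps_deriv D"
    by (simp add: algebra_simps)
  have "D^2 * fps_deriv B = D * (fps_deriv B * D)" by (simp add: power2_eq_square algebra_simps)
  also have "\<dots> = D * (fps_deriv D - B * fps_deriv D)"
    by (simp only: dB)
  also have "\<dots> = (D - B * D) * fps_deriv D" by (simp add: algebra_simps)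
  also have "\<dots> = fps_deriv D" using BD by simp
  finally have deriv: "D^2 * fps_deriv B = fps_deriv D" .
  have "D^2 * (fps_X + B^2 + 2 * fps_X^2 * fps_deriv B - fps_X * B - B) =
      fps_X * D^2 + (B * D)^2 + 2 * fps_X^2 * (D^2 * fps_deriv B) - fps_X * D * (B * D) - D * (B * D)"
    by (simp add: power2_eq_square algebra_simps)
  also have "\<dots> = 1 + fps_X * D + 2 * fps_X^2 * fps_deriv D - D"
    unfolding deriv BD by (simp add: power2_eq_square algebra_simps)
  also have "\<dots> = 0" using ode by simp
  finally show ?thesis using \<open>D \<noteq> 0\<close> by simp
qed

lemma fps_convolution_of_odd_dfact:
  fixes a :: "nat \<Rightarrow> nat"
  assumes conv: "\<And>n. n \<ge> 1 \<Longrightarrow> odd_dfact n = (\<Sum>k=1..n. a k * odd_dfact (n - k))"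
  defines "D \<equiv> Abs_fps (\<lambda>n. of_nat (odd_dfact n)) :: 'a::comm_semiring_1 fps"
  shows "D = 1 + Abs_fps (\<lambda>n. if n = 0 then 0 else of_nat (a n)) * D"
proof (rule fps_ext)
  fix n :: nat
  let ?B = "Abs_fps (\<lambda>n. if n = 0 then 0 else of_nat (a n)) :: 'a fps"
  show "D $ n = (1 + ?B * D) $ n"
  proof (cases "n = 0")
    case False
    have "(?B * D) $ n = (\<Sum>k=1..n. ?B $ k * D $ (n - k))"
      by (simp add: fps_mult_nth sum.atLeast_Suc_atMost)
    also have "\<dots> = of_nat (\<Sum>k=1..n. a k * odd_dfact (n - k))"
      by (simp add: D_def)
    finally show ?thesis using conv[of n] False by (simp add: D_def)
  qed (simp add: D_def)
qed

lemma recurrence_of_odd_dfact_convolution: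
  fixes a :: "nat \<Rightarrow> nat"
  assumes conv: "\<And>n. n \<ge> 1 \<Longrightarrow> odd_dfact n = (\<Sum>k=1..n. a k * odd_dfact (n - k))"
  shows "a 1 = 1 \<and> (\<forall>n\<ge>2. a n = (\<Sum>k=1..n-1. a k * a (n - k)) + (2*n - 3) * a (n - 1))"
proof -
  define D :: "rat fps" where "D = Abs_fps (\<lambda>n. of_nat (odd_dfact n))"
  define B :: "rat fps" where "B = Abs_fps (\<lambda>n. if n = 0 then 0 else of_nat (a n))"
  have "D = 1 + B * D"
    using fps_convolution_of_odd_dfact[OF conv] by (simp add: D_def B_def)
  moreover have "D \<noteq> 0" using odd_dfact_pos by (auto simp: D_def fps_eq_iff)
  ultimately have riccati: "B = fps_X + B^2 + 2 * fps_X^2 * fps_deriv B - fps_X * B"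
    using fps_riccati_of_convolution fps_odd_dfact_ode unfolding D_def by blast
  have "a n = (\<Sum>k=1..n-1. a k * a (n - k)) + (2*n - 3) * a (n - 1)" if "n \<ge> 2" for n
  proof -
    obtain m where n: "n = Suc (Suc m)" using \<open>n \<ge> 2\<close> by (metis add_2_eq_Suc le_Suc_ex)
    have square: "(B^2) $ n = of_nat (\<Sum>k=1..n-1. a k * a (n - k))"
    proof -
      have "(B^2) $ n = (\<Sum>k=0..n. B $ k * B $ (n - k))"
        by (simp add: power2_eq_square fps_mult_nth)
      also have "\<dots> = (\<Sum>k=1..n-1. B $ k * B $ (n - k))"
        by (simp add: n B_def sum.atLeast_Suc_atMost)
      also have "\<dots> = of_nat (\<Sum>k=1..n-1. a k * a (n - k))"
        by (auto simp: B_def intro!: sum.cong)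
      finally show ?thesis .
    qed
    have deriv: "(2 * fps_X^2 * fps_deriv B) $ n = 2 * of_nat (Suc m) * of_nat (a (Suc m))"
      by (simp add: n mult.assoc numeral_fps_const fps_X_power_mult_nth B_def)
    have "(of_nat (a n) :: rat) = of_nat (\<Sum>k=1..n-1. a k * a (n - k)) + of_nat ((2*n - 3) * a (n - 1))"
      using arg_cong[OF riccati, of "\<lambda>f. f $ n"] square deriv by (simp add: n B_def algebra_simps)
    then show ?thesis by (metis of_nat_add of_nat_eq_iff)
  qed
  moreover have "a 1 = 1" using conv[of 1] by simp
  ultimately show ?thesis by blast
qed

section \<open>Chord diagrams\<close>

lemma chord_diagrams_eq_perfect_matchings:
  "{f. chord_diagram n f} = perfect_matchings {0..<2*n}"
  by (auto simp: chord_diagram_def perfect_matchings_def)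

lemma card_chord_diagrams: "card {f. chord_diagram n f} = odd_dfact n"
  by (simp add: chord_diagrams_eq_perfect_matchings card_perfect_matchings matching_count_def)

lemma finite_chord_diagrams: "finite {f. chord_diagram n f}"
  by (simp add: chord_diagrams_eq_perfect_matchings finite_perfect_matchings)

definition closed_prefix :: "nat \<Rightarrow> (nat \<Rightarrow> nat) \<Rightarrow> bool" where
  "closed_prefix k f \<longleftrightarrow> (\<forall>x<2*k. f x < 2*k)"

definition diagram_suffix :: "nat \<Rightarrow> nat \<Rightarrow> (nat \<Rightarrow> nat) \<Rightarrow> nat \<Rightarrow> nat" where
  "diagram_suffix k n f = (\<lambda>x. if x < 2*(n - k) then f (x + 2*k) - 2*k else x)"

lemma closed_prefix_restrict_iff:
  "j \<le> k \<Longrightarrow> closed_prefix j (restrict_id f {..<2*k}) \<longleftrightarrow> closed_prefix j f"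
  by (simp add: closed_prefix_def)

lemma closed_prefix_chord_diagram: "chord_diagram n f \<Longrightarrow> closed_prefix n f"
  by (simp add: chord_diagram_def closed_prefix_def)

lemma closed_prefix_concat_diagram_iff:
  "j \<le> k \<Longrightarrow> closed_prefix j (concat_diagram k f1 m f2) \<longleftrightarrow> closed_prefix j f1"
  by (simp add: closed_prefix_def concat_diagram_def)

lemma chord_diagram_concat:
  assumes d1: "chord_diagram n1 f1" and d2: "chord_diagram n2 f2"
  shows "chord_diagram (n1 + n2) (concat_diagram n1 f1 n2 f2)"
  unfolding chord_diagram_def
proof (rule conjI; intro allI impI)
  let ?F = "concat_diagram n1 f1 n2 f2"
  fix x assume x: "x < 2*(n1 + n2)"
  show "?F x < 2*(n1 + n2) \<and> ?F x \<noteq> x \<and> ?F (?F x) = x"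
  proof (cases "x < 2*n1")
    case True
    then show ?thesis using d1 by (auto simp: concat_diagram_def chord_diagram_def)
  next
    case False
    then have "x - 2*n1 < 2*n2" using x by auto
    then have "f2 (x - 2*n1) < 2*n2 \<and> f2 (x - 2*n1) \<noteq> x - 2*n1 \<and> f2 (f2 (x - 2*n1)) = x - 2*n1"
      using d2 by (auto simp: chord_diagram_def)
    then show ?thesis using False x by (auto simp: concat_diagram_def)
  qed
qed (simp add: concat_diagram_def)

lemma chord_diagram_split:
  assumes d: "chord_diagram n f" and "k \<le> n" and cl: "closed_prefix k f"
  shows "chord_diagram k (restrict_id f {..<2*k})"
    and "chord_diagram (n - k) (diagram_suffix k n f)"
    and "f = concat_diagram k (restrict_id f {..<2*k}) (n - k) (diagram_suffix k n f)"
proof -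
  have D: "\<forall>x<2*n. f x < 2*n \<and> f x \<noteq> x \<and> f (f x) = x" "\<forall>x. 2*n \<le> x \<longrightarrow> f x = x"
    using d by (auto simp: chord_diagram_def)
  have low: "\<forall>x<2*k. f x < 2*k" using cl by (simp add: closed_prefix_def)
  have high: "2*k \<le> f x" if "2*k \<le> x" "x < 2*n" for x
    using that D low by (metis linorder_not_le)
  show "chord_diagram k (restrict_id f {..<2*k})"
    using D low \<open>k \<le> n\<close> by (auto simp: chord_diagram_def)
  show "chord_diagram (n - k) (diagram_suffix k n f)"
    unfolding chord_diagram_def
  proof (rule conjI; intro allI impI)
    fix x assume x: "x < 2*(n - k)"
    then have "2*k \<le> f (x + 2*k)" "f (x + 2*k) < 2*n" "f (x + 2*k) \<noteq> x + 2*k"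
      "f (f (x + 2*k)) = x + 2*k"
      using high[of "x + 2*k"] D by auto
    then show "diagram_suffix k n f x < 2*(n - k) \<and> diagram_suffix k n f x \<noteq> x \<and>
        diagram_suffix k n f (diagram_suffix k n f x) = x"
      using x \<open>k \<le> n\<close> by (auto simp: diagram_suffix_def)
  qed (simp add: diagram_suffix_def)
  show "f = concat_diagram k (restrict_id f {..<2*k}) (n - k) (diagram_suffix k n f)"
    using D high \<open>k \<le> n\<close> by (auto simp: fun_eq_iff concat_diagram_def diagram_suffix_def)
qed

lemma restrict_concat_diagram:
  "chord_diagram k f1 \<Longrightarrow> restrict_id (concat_diagram k f1 m f2) {..<2*k} = f1"
  by (auto simp: restrict_id_def concat_diagram_def chord_diagram_def fun_eq_iff)

lemma diagram_suffix_concat_diagram: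
  "k \<le> n \<Longrightarrow> chord_diagram (n - k) f2 \<Longrightarrow> diagram_suffix k n (concat_diagram k f1 (n - k) f2) = f2"
  by (auto simp: diagram_suffix_def concat_diagram_def chord_diagram_def fun_eq_iff)

lemma indecomposable_iff_no_closed_prefix:
  assumes "chord_diagram n f"
  shows "indecomposable n f \<longleftrightarrow> (\<forall>k. 0 < k \<longrightarrow> k < n \<longrightarrow> \<not> closed_prefix k f)"
proof
  assume ind: "indecomposable n f"
  show "\<forall>k. 0 < k \<longrightarrow> k < n \<longrightarrow> \<not> closed_prefix k f"
  proof (intro allI impI notI)
    fix k assume "0 < k" "k < n" "closed_prefix k f"
    with chord_diagram_split[OF assms] ind show False
      unfolding indecomposable_def by (metis less_imp_le zero_less_diff add_diff_inverse_nat not_less)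
  qed
next
  assume no_prefix: "\<forall>k. 0 < k \<longrightarrow> k < n \<longrightarrow> \<not> closed_prefix k f"
  show "indecomposable n f"
    unfolding indecomposable_def
  proof clarify
    fix n1 n2 f1 f2
    assume "0 < n1" "0 < n2" "n = n1 + n2" "chord_diagram n1 f1" "f = concat_diagram n1 f1 n2 f2"
    then show False
      using no_prefix closed_prefix_chord_diagram closed_prefix_concat_diagram_iff[of n1 n1 f1 n2 f2]
      by auto
  qed
qed

definition indecomposable_diagrams :: "nat \<Rightarrow> (nat \<Rightarrow> nat) set" where
  "indecomposable_diagrams k = {f. chord_diagram k f \<and> indecomposable k f}"

definition first_block_size :: "(nat \<Rightarrow> nat) \<Rightarrow> nat" where
  "first_block_size f = (LEAST k. 0 < k \<and> closed_prefix k f)"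

lemma first_block_size:
  assumes "chord_diagram n f" "0 < n"
  shows "0 < first_block_size f" "first_block_size f \<le> n" "closed_prefix (first_block_size f) f"
    and "\<And>j. 0 < j \<Longrightarrow> j < first_block_size f \<Longrightarrow> \<not> closed_prefix j f"
proof -
  have n: "0 < n \<and> closed_prefix n f" using assms closed_prefix_chord_diagram by blast
  show "0 < first_block_size f" "closed_prefix (first_block_size f) f"
    using LeastI[of "\<lambda>k. 0 < k \<and> closed_prefix k f", OF n] by (simp_all add: first_block_size_def)
  show "first_block_size f \<le> n"
    using Least_le[of "\<lambda>k. 0 < k \<and> closed_prefix k f", OF n] by (simp add: first_block_size_def)
  show "\<not> closed_prefix j f" if "0 < j" "j < first_block_size f" for j
    using not_less_Least[of j "\<lambda>k. 0 < k \<and> closed_prefix k f"] that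
    by (simp add: first_block_size_def)
qed

lemma first_block_size_concat_diagram:
  assumes "f1 \<in> indecomposable_diagrams k" "0 < k"
  shows "first_block_size (concat_diagram k f1 m f2) = k"
  unfolding first_block_size_def
proof (rule Least_equality)
  have f1: "chord_diagram k f1" "indecomposable k f1"
    using assms(1) by (auto simp: indecomposable_diagrams_def)
  show "0 < k \<and> closed_prefix k (concat_diagram k f1 m f2)"
    using assms(2) f1 closed_prefix_chord_diagram closed_prefix_concat_diagram_iff by blast
  show "k \<le> j" if "0 < j \<and> closed_prefix j (concat_diagram k f1 m f2)" for j
    using that f1 indecomposable_iff_no_closed_prefix[OF f1(1)] closed_prefix_concat_diagram_iff[of j k]
    by (meson linorder_not_le order.strict_implies_order)
qed

lemma bij_betw_first_block_decomposition:
  assumes "0 < n"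
  shows "bij_betw (\<lambda>(k, f1, f2). concat_diagram k f1 (n - k) f2)
    (SIGMA k:{1..n}. indecomposable_diagrams k \<times> {f. chord_diagram (n - k) f})
    {f. chord_diagram n f}"
proof (rule bij_betw_byWitness[where f' = "\<lambda>f. let k = first_block_size f in
    (k, restrict_id f {..<2*k}, diagram_suffix k n f)"])
  show "\<forall>p \<in> (SIGMA k:{1..n}. indecomposable_diagrams k \<times> {f. chord_diagram (n - k) f}).
      (\<lambda>f. let k = first_block_size f in (k, restrict_id f {..<2*k}, diagram_suffix k n f))
        ((\<lambda>(k, f1, f2). concat_diagram k f1 (n - k) f2) p) = p"
    by (auto simp: Let_def first_block_size_concat_diagram restrict_concat_diagram
          diagram_suffix_concat_diagram indecomposable_diagrams_def)
  show "\<forall>f\<in>{f. chord_diagram n f}. (\<lambda>(k, f1, f2). concat_diagram k f1 (n - k) f2)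
      (let k = first_block_size f in (k, restrict_id f {..<2*k}, diagram_suffix k n f)) = f"
    using first_block_size[OF _ assms] chord_diagram_split by (auto simp: Let_def)
  show "(\<lambda>(k, f1, f2). concat_diagram k f1 (n - k) f2) `
      (SIGMA k:{1..n}. indecomposable_diagrams k \<times> {f. chord_diagram (n - k) f}) \<subseteq> {f. chord_diagram n f}"
    using chord_diagram_concat by (fastforce simp: indecomposable_diagrams_def)
  show "(\<lambda>f. let k = first_block_size f in (k, restrict_id f {..<2*k}, diagram_suffix k n f)) `
      {f. chord_diagram n f} \<subseteq> (SIGMA k:{1..n}. indecomposable_diagrams k \<times> {f. chord_diagram (n - k) f})"
  proof (rule image_subsetI)
    fix f assume "f \<in> {f. chord_diagram n f}"
    then have f: "chord_diagram n f" by simp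
    note block = first_block_size[OF f assms]
    let ?k = "first_block_size f"
    note split = chord_diagram_split[OF f block(2,3)]
    have "indecomposable ?k (restrict_id f {..<2*?k})"
      using block(4) closed_prefix_restrict_iff[of _ ?k f]
      by (auto simp: indecomposable_iff_no_closed_prefix[OF split(1)])
    then show "(let k = ?k in (k, restrict_id f {..<2*k}, diagram_suffix k n f))
        \<in> (SIGMA k:{1..n}. indecomposable_diagrams k \<times> {f. chord_diagram (n - k) f})"
      using block split by (auto simp: Let_def indecomposable_diagrams_def)
  qed
qed

lemma odd_dfact_eq_sum_b_count:
  assumes "1 \<le> n"
  shows "odd_dfact n = (\<Sum>k=1..n. b_count k * odd_dfact (n - k))"
proof -
  have "odd_dfact n = card (SIGMA k:{1..n}. indecomposable_diagrams k \<times> {f. chord_diagram (n - k) f})"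
    using bij_betw_same_card[OF bij_betw_first_block_decomposition] assms
    by (simp add: card_chord_diagrams)
  also have "\<dots> = (\<Sum>k=1..n. card (indecomposable_diagrams k) * odd_dfact (n - k))"
    by (subst card_SigmaI)
       (auto simp: card_cartesian_product card_chord_diagrams finite_chord_diagrams indecomposable_diagrams_def
         intro: finite_subset[OF _ finite_chord_diagrams])
  finally show ?thesis by (simp add: b_count_def indecomposable_diagrams_def)
qed

section \<open>Labelled rooted maps\<close>

text \<open>A premap on a set of half-edges is a pair \<open>(s, a)\<close>, playing the role of \<open>(\<sigma>, \<alpha>)\<close>, of a
  permutation and a fixed-point-free involution; in a rooted premap on \<open>A \<ni> 0\<close> the root \<open>0\<close> is
  the only fixed point of \<open>a\<close>.\<close>

definition premap_rel :: "'a set \<Rightarrow> ('a \<Rightarrow> 'a) \<Rightarrow> ('a \<Rightarrow> 'a) \<Rightarrow> ('a \<times> 'a) set" where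
  "premap_rel A s a = {(z, s z) | z. z \<in> A} \<union> {(s z, z) | z. z \<in> A} \<union> {(z, a z) | z. z \<in> A}"

definition premap_connected :: "'a set \<Rightarrow> ('a \<Rightarrow> 'a) \<Rightarrow> ('a \<Rightarrow> 'a) \<Rightarrow> bool" where
  "premap_connected A s a \<longleftrightarrow> (\<forall>x\<in>A. \<forall>y\<in>A. (x, y) \<in> (premap_rel A s a)\<^sup>*)"

definition premaps :: "'a set \<Rightarrow> (('a \<Rightarrow> 'a) \<times> ('a \<Rightarrow> 'a)) set" where
  "premaps D = {s. s permutes D} \<times> perfect_matchings D"

definition rooted_premaps :: "nat set \<Rightarrow> ((nat \<Rightarrow> nat) \<times> (nat \<Rightarrow> nat)) set" where
  "rooted_premaps A = {s. s permutes A} \<times> perfect_matchings (A - {0})"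

definition rooted_maps :: "nat set \<Rightarrow> ((nat \<Rightarrow> nat) \<times> (nat \<Rightarrow> nat)) set" where
  "rooted_maps A = {(s, a). (s, a) \<in> rooted_premaps A \<and> premap_connected A s a}"

lemma premap_rel_cases:
  assumes "(x, y) \<in> premap_rel A s a"
  obtains z where "z \<in> A" "x = z" "y = s z" | z where "z \<in> A" "x = s z" "y = z"
    | z where "z \<in> A" "x = z" "y = a z"
  using assms by (auto simp: premap_rel_def)

lemma premap_relI:
  "z \<in> A \<Longrightarrow> (z, s z) \<in> premap_rel A s a"
  "z \<in> A \<Longrightarrow> (s z, z) \<in> premap_rel A s a"
  "z \<in> A \<Longrightarrow> (z, a z) \<in> premap_rel A s a"
  by (auto simp: premap_rel_def)

lemma finite_rooted_premaps: "finite A \<Longrightarrow> finite (rooted_premaps A)"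
  by (simp add: rooted_premaps_def finite_permutations finite_perfect_matchings)

lemma finite_rooted_maps: "finite A \<Longrightarrow> finite (rooted_maps A)"
  by (rule finite_subset[OF _ finite_rooted_premaps]) (auto simp: rooted_maps_def)

lemma finite_premaps: "finite D \<Longrightarrow> finite (premaps D)"
  by (simp add: premaps_def finite_permutations finite_perfect_matchings)

lemma rooted_premapsD:
  assumes "(s, a) \<in> rooted_premaps A"
  shows "s permutes A" "a permutes A" "a \<in> perfect_matchings (A - {0})" "a 0 = 0"
  using assms perfect_matching_permutes[of a "A - {0}"] permutes_subset[of a "A - {0}" A]
  by (auto simp: rooted_premaps_def perfect_matchings_def)

lemma premap_rel_map_permutation:
  assumes h: "bij_betw h C C'" and r: "(x, y) \<in> (premap_rel C s a)\<^sup>*"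
  shows "(h x, h y) \<in> (premap_rel C' (map_permutation C h s) (map_permutation C h a))\<^sup>*"
  using r
proof (induction rule: rtrancl_induct)
  case (step y z)
  have inj: "inj_on h C" and im: "h ` C = C'" using h by (auto simp: bij_betw_def)
  let ?s = "map_permutation C h s" and ?a = "map_permutation C h a"
  from step(2) have "(h y, h z) \<in> premap_rel C' ?s ?a"
  proof (cases rule: premap_rel_cases)
    case (1 w)
    then show ?thesis
      using premap_relI(1)[of "h w" C' ?s ?a] im map_permutation_apply[OF inj] by auto
  next
    case (2 w)
    then show ?thesis
      using premap_relI(2)[of "h w" C' ?s ?a] im map_permutation_apply[OF inj] by auto
  next
    case (3 w)
    then show ?thesis
      using premap_relI(3)[of "h w" C' ?a ?s] im map_permutation_apply[OF inj] by auto
  qed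
  then show ?case using step(3) by simp
qed simp

lemma perfect_matching_map_permutation:
  assumes h: "bij_betw h C C'" and a: "a \<in> perfect_matchings B" and "B \<subseteq> C"
  shows "map_permutation C h a \<in> perfect_matchings (h ` B)"
proof -
  have inj: "inj_on h C" using h by (simp add: bij_betw_def)
  have a': "\<forall>x\<in>B. a x \<in> B \<and> a x \<noteq> x \<and> a (a x) = x" "\<forall>x. x \<notin> B \<longrightarrow> a x = x"
    using a by (auto simp: perfect_matchings_def)
  have "map_permutation C h a y = y" if "y \<notin> h ` B" for y
  proof (cases "y \<in> h ` C")
    case True
    then obtain x where "x \<in> C" "y = h x" by blast
    then show ?thesis using that a' map_permutation_apply[OF inj] by auto
  qed (simp add: map_permutation_def)
  moreover have "map_permutation C h a (h x) \<in> h ` B \<and> map_permutation C h a (h x) \<noteq> h x \<and>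
      map_permutation C h a (map_permutation C h a (h x)) = h x" if "x \<in> B" for x
    using that a' \<open>B \<subseteq> C\<close> map_permutation_apply[OF inj] inj_on_eq_iff[OF inj] by (auto simp: subset_iff)
  ultimately show ?thesis by (auto simp: perfect_matchings_def)
qed

lemma rooted_map_map_permutation:
  assumes h: "bij_betw h C C'" and "0 \<in> C" "h 0 = 0" and sa: "(s, a) \<in> rooted_maps C"
  shows "(map_permutation C h s, map_permutation C h a) \<in> rooted_maps C'"
proof -
  have sa': "(s, a) \<in> rooted_premaps C" "premap_connected C s a"
    using sa by (auto simp: rooted_maps_def)
  have "h ` (C - {0}) = C' - {0}"
    using h \<open>0 \<in> C\<close> \<open>h 0 = 0\<close> inj_on_image_set_diff[of h C C "{0}"] by (simp add: bij_betw_def)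
  then have "map_permutation C h a \<in> perfect_matchings (C' - {0})"
    using perfect_matching_map_permutation[OF h rooted_premapsD(3)[OF sa'(1)]] by auto
  moreover have "map_permutation C h s permutes C'"
    using map_permutation_permutes[OF h rooted_premapsD(1)[OF sa'(1)]] .
  moreover have "premap_connected C' (map_permutation C h s) (map_permutation C h a)"
    unfolding premap_connected_def
  proof (intro ballI)
    fix x' y' assume "x' \<in> C'" "y' \<in> C'"
    then obtain x y where "x \<in> C" "y \<in> C" "x' = h x" "y' = h y"
      using h by (auto simp: bij_betw_def)
    then show "(x', y') \<in> (premap_rel C' (map_permutation C h s) (map_permutation C h a))\<^sup>*"
      using premap_rel_map_permutation[OF h] sa'(2) by (auto simp: premap_connected_def)
  qed
  ultimately show ?thesis by (simp add: rooted_maps_def rooted_premaps_def)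
qed

lemma bij_betw_rooted_maps:
  assumes h: "bij_betw h C C'" and "0 \<in> C" "h 0 = 0"
  shows "bij_betw (\<lambda>(s, a). (map_permutation C h s, map_permutation C h a))
           (rooted_maps C) (rooted_maps C')"
proof -
  let ?g = "inv_into C h"
  have g: "bij_betw ?g C' C" using h by (rule bij_betw_inv_into)
  have "0 \<in> C'" "?g 0 = 0"
    using h \<open>0 \<in> C\<close> \<open>h 0 = 0\<close> by (metis bij_betwE, metis bij_betw_inv_into_left)
  have left_inverse: "map_permutation C' ?g (map_permutation C h p) = p" if "p permutes C" for p
    using h that by (intro map_permutation_compose_inv) (auto simp: bij_betw_def)
  have right_inverse: "map_permutation C h (map_permutation C' ?g p) = p" if "p permutes C'" for p
    using g that h by (intro map_permutation_compose_inv) (auto simp: bij_betw_def f_inv_into_f)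
  show ?thesis
  proof (rule bij_betw_byWitness[where f' = "\<lambda>(s, a). (map_permutation C' ?g s, map_permutation C' ?g a)"])
    show "(\<lambda>(s, a). (map_permutation C h s, map_permutation C h a)) ` rooted_maps C \<subseteq> rooted_maps C'"
      using rooted_map_map_permutation[OF h \<open>0 \<in> C\<close> \<open>h 0 = 0\<close>] by auto
    show "(\<lambda>(s, a). (map_permutation C' ?g s, map_permutation C' ?g a)) ` rooted_maps C' \<subseteq> rooted_maps C"
      using rooted_map_map_permutation[OF g \<open>0 \<in> C'\<close> \<open>?g 0 = 0\<close>] by auto
  qed (auto simp: rooted_maps_def left_inverse right_inverse dest: rooted_premapsD)
qed

lemma card_rooted_maps:
  assumes "finite C" "0 \<in> C"
  shows "card (rooted_maps C) = card (rooted_maps {0..<card C})"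
proof -
  obtain h0 where h0: "bij_betw h0 C {0..<card C}"
    using ex_bij_betw_finite_nat[OF assms(1)] by blast
  then have "h0 0 \<in> {0..<card C}" using assms(2) by (metis bij_betwE)
  then have "bij_betw (Transposition.transpose 0 (h0 0)) {0..<card C} {0..<card C}"
    by (intro permutes_imp_bij permutes_swap_id) auto
  then have "bij_betw (Transposition.transpose 0 (h0 0) \<circ> h0) C {0..<card C}"
    using h0 by (rule bij_betw_trans[rotated])
  then show ?thesis
    using bij_betw_same_card[OF bij_betw_rooted_maps] assms(2) by simp
qed

lemma comp_disjoint_permutes_apply:
  assumes "p permutes C" "q permutes D" "C \<inter> D = {}"
  shows "(p \<circ> q) x = (if x \<in> C then p x else q x)"
proof (cases "x \<in> D")
  case True
  then have "q x \<notin> C" "x \<notin> C" using assms permutes_in_image[OF assms(2)] by blast+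
  then show ?thesis using permutes_not_in[OF assms(1)] by simp
qed (use assms in \<open>auto simp: permutes_not_in\<close>)

lemma restrict_id_comp_disjoint_permutes:
  assumes "p permutes C" "q permutes D" "C \<inter> D = {}"
  shows "restrict_id (p \<circ> q) C = p" "restrict_id (p \<circ> q) D = q"
  using assms comp_disjoint_permutes_apply[OF assms]
  by (auto simp: fun_eq_iff restrict_id_def permutes_not_in)

lemma perfect_matchings_comp_disjoint:
  assumes a1: "a1 \<in> perfect_matchings B1" and a2: "a2 \<in> perfect_matchings B2" and "B1 \<inter> B2 = {}"
  shows "a1 \<circ> a2 \<in> perfect_matchings (B1 \<union> B2)"
proof -
  have "(a1 \<circ> a2) x = (if x \<in> B1 then a1 x else a2 x)" for x
    using comp_disjoint_permutes_apply[OF perfect_matching_permutes[OF a1]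
        perfect_matching_permutes[OF a2] \<open>B1 \<inter> B2 = {}\<close>] .
  then show ?thesis
    using a1 a2 \<open>B1 \<inter> B2 = {}\<close> by (auto simp: perfect_matchings_def)
qed

lemma permutes_restrict_id_invariant:
  assumes p: "p permutes A" and "K \<subseteq> A" and inv: "\<forall>z\<in>A. p z \<in> K \<longleftrightarrow> z \<in> K"
  shows "restrict_id p K permutes K"
proof (rule permutes_restrict_id, rule bij_betw_imageI)
  show "inj_on p K" using permutes_inj_on[OF p] .
  have "y \<in> p ` K" if "y \<in> K" for y
  proof -
    have "inv p y \<in> A" using permutes_in_image[OF permutes_inv[OF p]] that \<open>K \<subseteq> A\<close> by blast
    moreover have "p (inv p y) = y" using permutes_inverses(1)[OF p] by simp
    ultimately show ?thesis using inv that by (metis image_eqI)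
  qed
  then show "p ` K = K" using inv \<open>K \<subseteq> A\<close> by auto
qed

lemma restrict_id_invariant_comp:
  assumes p: "p permutes A" and "K \<subseteq> A" and inv: "\<forall>z\<in>A. p z \<in> K \<longleftrightarrow> z \<in> K"
  shows "restrict_id p K \<circ> restrict_id p (A - K) = p"
proof
  fix x
  show "(restrict_id p K \<circ> restrict_id p (A - K)) x = p x"
  proof (cases "x \<in> A")
    case True
    then show ?thesis using inv permutes_in_image[OF p, of x] by (cases "x \<in> K") auto
  next
    case False
    then have "x \<notin> K" using \<open>K \<subseteq> A\<close> by blast
    then show ?thesis using \<open>x \<notin> A\<close> permutes_not_in[OF p] by simp
  qed
qed

lemma perfect_matching_restrict_id_invariant:
  assumes a: "a \<in> perfect_matchings B" and inv: "\<forall>z\<in>B. a z \<in> K \<longleftrightarrow> z \<in> K"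
  shows "restrict_id a K \<in> perfect_matchings (B \<inter> K)"
  using assms by (auto simp: perfect_matchings_def restrict_id_def)

lemma premap_rel_sym:
  assumes "a permutes A" "\<And>z. a (a z) = z" "(x, y) \<in> premap_rel A s a"
  shows "(y, x) \<in> premap_rel A s a"
  using assms(3)
proof (cases rule: premap_rel_cases)
  case (3 z)
  then show ?thesis
    using premap_relI(3)[of "a z" A a s] assms(1,2) by (simp add: permutes_in_image)
qed (auto intro: premap_relI)

lemma premap_connected_from_root:
  assumes "a permutes A" "\<And>z. a (a z) = z" "\<forall>y\<in>A. (r, y) \<in> (premap_rel A s a)\<^sup>*"
  shows "premap_connected A s a"
proof -
  have "sym ((premap_rel A s a)\<^sup>*)"
    using premap_rel_sym[OF assms(1,2)] by (intro sym_rtrancl) (auto simp: sym_def)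
  then show ?thesis
    using assms(3) unfolding premap_connected_def sym_def by (meson rtrancl_trans)
qed

lemma premap_rel_invariant:
  assumes "(x, y) \<in> (premap_rel A s a)\<^sup>*" "x \<in> K" "K \<subseteq> A"
    and s: "\<forall>z\<in>A. s z \<in> K \<longleftrightarrow> z \<in> K" and a: "\<forall>z\<in>A. a z \<in> K \<longleftrightarrow> z \<in> K"
  shows "y \<in> K \<and> (x, y) \<in> (premap_rel K (restrict_id s K) (restrict_id a K))\<^sup>*"
  using assms(1)
proof (induction rule: rtrancl_induct)
  case (step y z)
  then have "y \<in> K" by simp
  from step(2) have "z \<in> K \<and> (y, z) \<in> premap_rel K (restrict_id s K) (restrict_id a K)"
  proof (cases rule: premap_rel_cases)
    case (1 w)
    then show ?thesis
      using \<open>y \<in> K\<close> s premap_relI(1)[of w K "restrict_id s K" "restrict_id a K"] by auto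
  next
    case (2 w)
    then show ?thesis
      using \<open>y \<in> K\<close> s premap_relI(2)[of w K "restrict_id s K" "restrict_id a K"] by auto
  next
    case (3 w)
    then show ?thesis
      using \<open>y \<in> K\<close> a premap_relI(3)[of w K "restrict_id a K" "restrict_id s K"] by auto
  qed
  then show ?case using step(3) by auto
qed (use assms(2) in simp)

lemma premap_rel_mono:
  assumes "C \<subseteq> A" "\<And>z. z \<in> C \<Longrightarrow> s' z = s z" "\<And>z. z \<in> C \<Longrightarrow> a' z = a z"
  shows "premap_rel C s a \<subseteq> premap_rel A s' a'"
proof (rule subrelI)
  fix x y assume "(x, y) \<in> premap_rel C s a"
  then show "(x, y) \<in> premap_rel A s' a'"
  proof (cases rule: premap_rel_cases)
    case (1 z)
    then show ?thesis using premap_relI(1)[of z A s' a'] assms by auto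
  next
    case (2 z)
    then show ?thesis using premap_relI(2)[of z A s' a'] assms by auto
  next
    case (3 z)
    then show ?thesis using premap_relI(3)[of z A a' s'] assms by auto
  qed
qed

definition root_component :: "nat set \<Rightarrow> (nat \<Rightarrow> nat) \<Rightarrow> (nat \<Rightarrow> nat) \<Rightarrow> nat set" where
  "root_component A s a = {y. (0, y) \<in> (premap_rel A s a)\<^sup>*}"

lemma root_component:
  assumes "(s, a) \<in> rooted_premaps A" "0 \<in> A"
  shows "0 \<in> root_component A s a" "root_component A s a \<subseteq> A"
    and "\<forall>z\<in>A. s z \<in> root_component A s a \<longleftrightarrow> z \<in> root_component A s a"
    and "\<forall>z\<in>A. a z \<in> root_component A s a \<longleftrightarrow> z \<in> root_component A s a"
proof -
  note sa = rooted_premapsD[OF assms(1)]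
  have rel_A: "premap_rel A s a \<subseteq> A \<times> A"
    using sa by (auto simp: premap_rel_def permutes_in_image)
  show "0 \<in> root_component A s a" by (simp add: root_component_def)
  show "root_component A s a \<subseteq> A"
  proof
    fix y assume "y \<in> root_component A s a"
    then have "(0, y) \<in> (premap_rel A s a)\<^sup>*" by (simp add: root_component_def)
    then show "y \<in> A" using rel_A assms(2) by (induction rule: rtrancl_induct) auto
  qed
  show "\<forall>z\<in>A. s z \<in> root_component A s a \<longleftrightarrow> z \<in> root_component A s a"
    using premap_relI(1,2)[of _ A s a] by (auto simp: root_component_def intro: rtrancl_into_rtrancl)
  show "\<forall>z\<in>A. a z \<in> root_component A s a \<longleftrightarrow> z \<in> root_component A s a"
  proof
    fix z assume "z \<in> A"
    moreover have "a z \<in> A" using sa(2) \<open>z \<in> A\<close> by (simp add: permutes_in_image)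
    ultimately have "(z, a z) \<in> premap_rel A s a" "(a z, z) \<in> premap_rel A s a"
      using premap_relI(3)[of _ A a s] perfect_matching_involution[OF sa(3)] by metis+
    then show "a z \<in> root_component A s a \<longleftrightarrow> z \<in> root_component A s a"
      by (auto simp: root_component_def intro: rtrancl_into_rtrancl)
  qed
qed

lemma glue_rooted_map:
  assumes "C \<subseteq> A" "0 \<in> C" and m1: "(s1, a1) \<in> rooted_maps C" and m2: "(s2, a2) \<in> premaps (A - C)"
  shows "(s1 \<circ> s2, a1 \<circ> a2) \<in> rooted_premaps A"
    and "root_component A (s1 \<circ> s2) (a1 \<circ> a2) = C"
    and "restrict_id (s1 \<circ> s2) C = s1" "restrict_id (s1 \<circ> s2) (A - C) = s2"
    and "restrict_id (a1 \<circ> a2) C = a1" "restrict_id (a1 \<circ> a2) (A - C) = a2"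
proof -
  have m1': "(s1, a1) \<in> rooted_premaps C" "premap_connected C s1 a1"
    using m1 by (auto simp: rooted_maps_def)
  note p1 = rooted_premapsD[OF m1'(1)]
  have s2: "s2 permutes A - C" and a2: "a2 \<in> perfect_matchings (A - C)"
    using m2 by (auto simp: premaps_def)
  note a2' = perfect_matching_permutes[OF a2]
  have disj: "C \<inter> (A - C) = {}" by blast
  note s_apply = comp_disjoint_permutes_apply[OF p1(1) s2 disj]
  note a_apply = comp_disjoint_permutes_apply[OF p1(2) a2' disj]
  have "s1 \<circ> s2 permutes A"
    using permutes_compose[OF permutes_subset[OF s2 Diff_subset] permutes_subset[OF p1(1) \<open>C \<subseteq> A\<close>]] .
  moreover have "(C - {0}) \<union> (A - C) = A - {0}" "(C - {0}) \<inter> (A - C) = {}"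
    using \<open>C \<subseteq> A\<close> \<open>0 \<in> C\<close> by auto
  then have "a1 \<circ> a2 \<in> perfect_matchings (A - {0})"
    using perfect_matchings_comp_disjoint[OF p1(3) a2] by simp
  ultimately show glued: "(s1 \<circ> s2, a1 \<circ> a2) \<in> rooted_premaps A"
    by (simp add: rooted_premaps_def)
  show "restrict_id (s1 \<circ> s2) C = s1" "restrict_id (s1 \<circ> s2) (A - C) = s2"
    using restrict_id_comp_disjoint_permutes[OF p1(1) s2 disj] by simp_all
  show "restrict_id (a1 \<circ> a2) C = a1" "restrict_id (a1 \<circ> a2) (A - C) = a2"
    using restrict_id_comp_disjoint_permutes[OF p1(2) a2' disj] by simp_all
  show "root_component A (s1 \<circ> s2) (a1 \<circ> a2) = C"
  proof
    have on_C: "(s1 \<circ> s2) z = s1 z" "(a1 \<circ> a2) z = a1 z" if "z \<in> C" for z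
      using that s_apply a_apply by simp_all
    have on_rest: "(s1 \<circ> s2) z = s2 z" "(a1 \<circ> a2) z = a2 z" if "z \<in> A - C" for z
      using that s_apply a_apply by simp_all
    have "\<forall>z\<in>A. (s1 \<circ> s2) z \<in> C \<longleftrightarrow> z \<in> C" "\<forall>z\<in>A. (a1 \<circ> a2) z \<in> C \<longleftrightarrow> z \<in> C"
      using on_C on_rest permutes_in_image[OF p1(1)] permutes_in_image[OF p1(2)]
        permutes_in_image[OF s2] permutes_in_image[OF a2'] by (metis Diff_iff)+
    then show "root_component A (s1 \<circ> s2) (a1 \<circ> a2) \<subseteq> C"
      using premap_rel_invariant[of 0 _ A "s1 \<circ> s2" "a1 \<circ> a2" C] \<open>0 \<in> C\<close> \<open>C \<subseteq> A\<close>
      unfolding root_component_def by blast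
    have "premap_rel C s1 a1 \<subseteq> premap_rel A (s1 \<circ> s2) (a1 \<circ> a2)"
      using premap_rel_mono[OF \<open>C \<subseteq> A\<close>] on_C by metis
    then show "C \<subseteq> root_component A (s1 \<circ> s2) (a1 \<circ> a2)"
      using m1'(2) \<open>0 \<in> C\<close> rtrancl_mono unfolding premap_connected_def root_component_def by blast
  qed
qed

lemma split_rooted_premap:
  assumes sa: "(s, a) \<in> rooted_premaps A" and "0 \<in> A"
  defines "K \<equiv> root_component A s a"
  shows "(restrict_id s K, restrict_id a K) \<in> rooted_maps K"
    and "(restrict_id s (A - K), restrict_id a (A - K)) \<in> premaps (A - K)"
    and "restrict_id s K \<circ> restrict_id s (A - K) = s" "restrict_id a K \<circ> restrict_id a (A - K) = a"
proof -
  note p = rooted_premapsD[OF sa]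
  note K = root_component[OF sa \<open>0 \<in> A\<close>, folded K_def]
  have s_co: "\<forall>z\<in>A. s z \<in> A - K \<longleftrightarrow> z \<in> A - K" and a_co: "\<forall>z\<in>A. a z \<in> A - K \<longleftrightarrow> z \<in> A - K"
    using K p(1,2) by (auto simp: permutes_in_image)
  have "(A - {0}) \<inter> K = K - {0}" "(A - {0}) \<inter> (A - K) = A - K" using K by auto
  then have aK: "restrict_id a K \<in> perfect_matchings (K - {0})"
    and aC: "restrict_id a (A - K) \<in> perfect_matchings (A - K)"
    using perfect_matching_restrict_id_invariant[OF p(3)] K(4) a_co by (metis Diff_iff)+
  have sK: "restrict_id s K permutes K"
    using permutes_restrict_id_invariant[OF p(1) K(2,3)] .
  have "premap_connected K (restrict_id s K) (restrict_id a K)"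
  proof (rule premap_connected_from_root)
    show "restrict_id a K permutes K"
      using perfect_matching_permutes[OF aK] permutes_subset by blast
    show "restrict_id a K (restrict_id a K z) = z" for z
      using perfect_matching_involution[OF aK] .
    show "\<forall>y\<in>K. (0, y) \<in> (premap_rel K (restrict_id s K) (restrict_id a K))\<^sup>*"
      using premap_rel_invariant[of 0 _ A s a K] K by (auto simp: K_def root_component_def)
  qed
  then show "(restrict_id s K, restrict_id a K) \<in> rooted_maps K"
    using sK aK by (simp add: rooted_maps_def rooted_premaps_def)
  show "(restrict_id s (A - K), restrict_id a (A - K)) \<in> premaps (A - K)"
    using permutes_restrict_id_invariant[OF p(1) _ s_co] aC by (simp add: premaps_def)
  show "restrict_id s K \<circ> restrict_id s (A - K) = s" "restrict_id a K \<circ> restrict_id a (A - K) = a"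
    using restrict_id_invariant_comp[OF p(1) K(2,3)] restrict_id_invariant_comp[OF p(2) K(2,4)] .
qed

lemma bij_betw_root_component_decomposition:
  assumes "0 \<in> A"
  shows "bij_betw (\<lambda>(C, (s1, a1), (s2, a2)). (s1 \<circ> s2, a1 \<circ> a2))
    (SIGMA C:{C. C \<subseteq> A \<and> 0 \<in> C}. rooted_maps C \<times> premaps (A - C)) (rooted_premaps A)"
    (is "bij_betw ?glue ?parts _")
proof -
  define cut where "cut = (\<lambda>(s, a). let K = root_component A s a in
    (K, (restrict_id s K, restrict_id a K), (restrict_id s (A - K), restrict_id a (A - K))))"
  have cut_glue: "cut (?glue p) = p" if "p \<in> ?parts" for p
  proof -
    obtain C s1 a1 s2 a2 where p: "p = (C, (s1, a1), (s2, a2))" by (metis prod.exhaust)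
    show ?thesis
      using that glue_rooted_map(2-6)[of C A s1 a1 s2 a2] by (simp add: p cut_def Let_def)
  qed
  have glue_cut: "?glue (cut q) = q" and cut_parts: "cut q \<in> ?parts" if "q \<in> rooted_premaps A" for q
  proof -
    obtain s a where q: "q = (s, a)" by (metis prod.exhaust)
    show "?glue (cut q) = q" "cut q \<in> ?parts"
      using that split_rooted_premap[OF _ assms, of s a] root_component(1,2)[OF _ assms, of s a]
      by (simp_all add: q cut_def Let_def)
  qed
  show ?thesis
  proof (rule bij_betw_byWitness[where f' = cut])
    show "?glue ` ?parts \<subseteq> rooted_premaps A"
    proof (rule image_subsetI)
      fix p assume "p \<in> ?parts"
      moreover obtain C s1 a1 s2 a2 where "p = (C, (s1, a1), (s2, a2))" by (metis prod.exhaust)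
      ultimately show "?glue p \<in> rooted_premaps A" using glue_rooted_map(1)[of C A s1 a1 s2 a2] by auto
    qed
    show "\<forall>p\<in>?parts. cut (?glue p) = p" by (intro ballI cut_glue)
    show "\<forall>q\<in>rooted_premaps A. ?glue (cut q) = q" by (intro ballI glue_cut)
    show "cut ` rooted_premaps A \<subseteq> ?parts" by (intro image_subsetI cut_parts)
  qed
qed

lemma card_rooted_premaps_decomposition:
  assumes "finite A" "0 \<in> A"
  shows "card (rooted_premaps A) =
    (\<Sum>C | C \<subseteq> A \<and> 0 \<in> C. card (rooted_maps C) * card (premaps (A - C)))"
proof -
  have fin: "finite (rooted_maps C \<times> premaps (A - C))" if "C \<subseteq> A" for C
    using finite_subset[OF that assms(1)] assms(1)
    by (simp add: finite_rooted_maps finite_premaps)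
  have "card (rooted_premaps A) =
      card (SIGMA C:{C. C \<subseteq> A \<and> 0 \<in> C}. rooted_maps C \<times> premaps (A - C))"
    using bij_betw_same_card[OF bij_betw_root_component_decomposition[OF assms(2)]] by (rule sym)
  also have "\<dots> = (\<Sum>C | C \<subseteq> A \<and> 0 \<in> C. card (rooted_maps C \<times> premaps (A - C)))"
  proof (rule card_SigmaI)
    show "finite {C. C \<subseteq> A \<and> 0 \<in> C}"
      by (rule finite_subset[of _ "Pow A"]) (use assms(1) in auto)
  qed (use fin in blast)
  finally show ?thesis by (simp only: card_cartesian_product)
qed

section \<open>Closed maps up to isomorphism\<close>

lemma card_edges_rooted:
  fixes m :: nat
  assumes "0 < m" and a: "a \<in> perfect_matchings ({0..<m} - {0})"
  shows "2 * card {{x, a x} | x. x < m} = m + 1"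
proof -
  let ?E = "{{x, a x} | x. x \<in> {0..<m} - {0}}"
  have "a 0 = 0" using a by (simp add: perfect_matchings_def)
  then have "{{x, a x} | x. x < m} = insert {0} ?E"
    using \<open>0 < m\<close> by auto
  moreover have "{0} \<notin> ?E"
    using a by (auto simp: perfect_matchings_def doubleton_eq_iff)
  moreover have "2 * card ?E = m - 1"
    using card_matched_pairs[OF _ a] \<open>0 < m\<close> by simp
  ultimately show ?thesis using \<open>0 < m\<close> by simp
qed

lemma perfect_matchings_rooted_iff:
  fixes m :: nat
  shows "a \<in> perfect_matchings ({0..<m} - {0}) \<longleftrightarrow>
     a permutes {0..<m} \<and> (\<forall>x<m. a (a x) = x) \<and> a 0 = 0 \<and> (\<forall>x<m. a x = x \<longleftrightarrow> x = 0)"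
proof
  assume a: "a \<in> perfect_matchings ({0..<m} - {0})"
  have "a x = x \<longleftrightarrow> x = 0" if "x < m" for x
  proof (cases "x = 0")
    case False
    then have "x \<in> {0..<m} - {0}" using that by simp
    then show ?thesis using a False unfolding perfect_matchings_def by blast
  qed (use a in \<open>simp add: perfect_matchings_def\<close>)
  moreover have "a permutes {0..<m}"
    using permutes_subset[OF perfect_matching_permutes[OF a]] by blast
  ultimately show "a permutes {0..<m} \<and> (\<forall>x<m. a (a x) = x) \<and> a 0 = 0 \<and> (\<forall>x<m. a x = x \<longleftrightarrow> x = 0)"
    using perfect_matching_involution[OF a] a by (simp add: perfect_matchings_def)
next
  assume h: "a permutes {0..<m} \<and> (\<forall>x<m. a (a x) = x) \<and> a 0 = 0 \<and> (\<forall>x<m. a x = x \<longleftrightarrow> x = 0)"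
  show "a \<in> perfect_matchings ({0..<m} - {0})"
    unfolding perfect_matchings_def
  proof (intro CollectI conjI ballI allI impI)
    fix x assume x: "x \<in> {0..<m} - {0}"
    have "a x < m" using h x permutes_in_image[of a "{0..<m}" x] by auto
    moreover have "a x \<noteq> 0" using h x by (metis DiffE atLeastLessThan_iff singletonI)
    ultimately show "a x \<in> {0..<m} - {0}" by simp
    show "a x \<noteq> x" "a (a x) = x" using h x by auto
  next
    fix x assume "x \<notin> {0..<m} - {0}"
    then show "a x = x" using h permutes_not_in[of a "{0..<m}" x] by (cases "x = 0") auto
  qed
qed

lemma rooted_closed_map_iff:
  "rooted_map (m, s, a) \<and> closed_map (m, s, a) \<longleftrightarrow> 0 < m \<and> (s, a) \<in> rooted_maps {0..<m}"
proof -
  have "premap_rel {0..<m} s a =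
      {(z, s z) | z. z < m} \<union> {(s z, z) | z. z < m} \<union> {(z, a z) | z. z < m}"
    by (auto simp: premap_rel_def)
  then have "premap_connected {0..<m} s a \<longleftrightarrow> (\<forall>x<m. \<forall>y<m. (x, y) \<in>
      ({(z, s z) | z. z < m} \<union> {(s z, z) | z. z < m} \<union> {(z, a z) | z. z < m})\<^sup>*)"
    by (simp add: premap_connected_def atLeast0LessThan Ball_def)
  then show ?thesis
    by (auto simp: rooted_map_def closed_map_def rooted_maps_def rooted_premaps_def
        perfect_matchings_rooted_iff)
qed

lemma closed_maps_of_size_eq:
  assumes "1 \<le> n"
  shows "closed_maps_of_size n = (\<lambda>(s, a). (2*n - 1, s, a)) ` rooted_maps {0..<2*n - 1}"
proof -
  have size: "map_size (m, s, a) = n \<longleftrightarrow> m = 2*n - 1"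
    if "0 < m" "(s, a) \<in> rooted_maps {0..<m}" for m s a
  proof -
    have "a \<in> perfect_matchings ({0..<m} - {0})"
      using that(2) by (simp add: rooted_maps_def rooted_premaps_def)
    then show ?thesis
      using card_edges_rooted[OF that(1)] assms by (auto simp: map_size_def)
  qed
  show ?thesis
  proof (intro equalityI subsetI)
    fix M assume M: "M \<in> closed_maps_of_size n"
    obtain m s a where M_eq: "M = (m, s, a)" by (metis prod.exhaust)
    have "0 < m" "(s, a) \<in> rooted_maps {0..<m}"
      using M rooted_closed_map_iff by (auto simp: M_eq closed_maps_of_size_def)
    moreover from this have "m = 2*n - 1"
      using size M by (simp add: M_eq closed_maps_of_size_def)
    ultimately show "M \<in> (\<lambda>(s, a). (2*n - 1, s, a)) ` rooted_maps {0..<2*n - 1}"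
      by (auto simp: M_eq)
  next
    fix M assume "M \<in> (\<lambda>(s, a). (2*n - 1, s, a)) ` rooted_maps {0..<2*n - 1}"
    then obtain s a where M_eq: "M = (2*n - 1, s, a)" and sa: "(s, a) \<in> rooted_maps {0..<2*n - 1}"
      by auto
    have "0 < 2*n - 1" using assms by simp
    then show "M \<in> closed_maps_of_size n"
      using rooted_closed_map_iff[of "2*n - 1" s a] size[OF _ sa] sa
      by (simp add: M_eq closed_maps_of_size_def)
  qed
qed

definition root_fixing_perms :: "nat \<Rightarrow> (nat \<Rightarrow> nat) set" where
  "root_fixing_perms m = {\<phi>. \<phi> permutes {0..<m} \<and> \<phi> 0 = 0}"

lemma root_fixing_perms_eq: "root_fixing_perms m = {\<phi>. \<phi> permutes {0..<m} - {0}}"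
proof -
  have "\<phi> permutes {0..<m} \<and> \<phi> 0 = 0 \<longleftrightarrow> \<phi> permutes {0..<m} - {0}" for \<phi>
  proof
    assume h: "\<phi> permutes {0..<m} \<and> \<phi> 0 = 0"
    show "\<phi> permutes {0..<m} - {0}" by (rule permutes_superset[OF conjunct1[OF h]]) (use h in auto)
  next
    assume "\<phi> permutes {0..<m} - {0}"
    then show "\<phi> permutes {0..<m} \<and> \<phi> 0 = 0"
      using permutes_subset[of \<phi> "{0..<m} - {0}" "{0..<m}"] permutes_not_in[of \<phi> "{0..<m} - {0}" 0]
      by auto
  qed
  then show ?thesis by (simp add: root_fixing_perms_def)
qed

lemma card_root_fixing_perms: "0 < m \<Longrightarrow> card (root_fixing_perms m) = fact (m - 1)"
  by (simp add: root_fixing_perms_eq card_permutations card_Diff_singleton)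

lemma map_permutation_eq_iff:
  assumes \<phi>: "\<phi> permutes A" and "q permutes A"
  shows "map_permutation A \<phi> p = q \<longleftrightarrow> (\<forall>x\<in>A. \<phi> (p x) = q (\<phi> x))"
proof
  assume "map_permutation A \<phi> p = q"
  then show "\<forall>x\<in>A. \<phi> (p x) = q (\<phi> x)"
    using map_permutation_apply[OF permutes_inj_on[OF \<phi>]] by auto
next
  assume comm: "\<forall>x\<in>A. \<phi> (p x) = q (\<phi> x)"
  show "map_permutation A \<phi> p = q"
  proof
    fix y
    show "map_permutation A \<phi> p y = q y"
    proof (cases "y \<in> A")
      case True
      then obtain x where "x \<in> A" "y = \<phi> x" using permutes_image[OF \<phi>] by blast
      then show ?thesis using comm map_permutation_apply[OF permutes_inj_on[OF \<phi>]] by auto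
    next
      case False
      then show ?thesis
        using permutes_image[OF \<phi>] permutes_not_in[OF \<open>q permutes A\<close>]
        by (simp add: map_permutation_def)
    qed
  qed
qed

lemma map_iso_iff_relabel:
  assumes "s' permutes {0..<m'}" "a' permutes {0..<m'}"
  shows "map_iso (m, s, a) (m', s', a') \<longleftrightarrow>
    m' = m \<and> (\<exists>\<phi>\<in>root_fixing_perms m.
      s' = map_permutation {0..<m} \<phi> s \<and> a' = map_permutation {0..<m} \<phi> a)"
proof -
  have "(\<forall>x<m. \<phi> (s x) = s' (\<phi> x) \<and> \<phi> (a x) = a' (\<phi> x)) \<longleftrightarrow>
      s' = map_permutation {0..<m} \<phi> s \<and> a' = map_permutation {0..<m} \<phi> a"
    if "\<phi> permutes {0..<m}" "m' = m" for \<phi>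
    using map_permutation_eq_iff[OF that(1), of s' s] map_permutation_eq_iff[OF that(1), of a' a]
      assms that(2) by auto
  then show ?thesis unfolding map_iso_def root_fixing_perms_def by auto
qed

lemma rooted_map_permutes:
  assumes "rooted_map (m, s, a)"
  shows "s permutes {0..<m}" "a permutes {0..<m}"
  using assms unfolding rooted_map_def by simp_all

lemma map_iso_refl:
  assumes "rooted_map (m, s, a)"
  shows "map_iso (m, s, a) (m, s, a)"
proof -
  note perm = rooted_map_permutes[OF assms]
  have "id \<in> root_fixing_perms m" by (simp add: root_fixing_perms_def permutes_id)
  moreover have "s = map_permutation {0..<m} id s" "a = map_permutation {0..<m} id a"
    using perm by simp_all
  ultimately show ?thesis
    unfolding map_iso_iff_relabel[OF perm] by blast
qed

lemma map_iso_sym: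
  assumes "rooted_map (m, s, a)" "rooted_map (m', s', a')" "map_iso (m, s, a) (m', s', a')"
  shows "map_iso (m', s', a') (m, s, a)"
proof -
  note perm = rooted_map_permutes[OF assms(1)]
  obtain \<phi> where "\<phi> \<in> root_fixing_perms m" "m' = m"
    and s': "s' = map_permutation {0..<m} \<phi> s" and a': "a' = map_permutation {0..<m} \<phi> a"
    using assms(3) unfolding map_iso_iff_relabel[OF rooted_map_permutes[OF assms(2)]] by blast
  then have \<phi>: "\<phi> permutes {0..<m}" "\<phi> 0 = 0" by (auto simp: root_fixing_perms_def)
  have "inv \<phi> \<in> root_fixing_perms m"
    using \<phi> permutes_inv[OF \<phi>(1)] permutes_inv_eq[OF \<phi>(1)] by (auto simp: root_fixing_perms_def)
  moreover have "map_permutation {0..<m} (inv \<phi>) (map_permutation {0..<m} \<phi> p) = p"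
    if "p permutes {0..<m}" for p
    using permutes_imp_bij[OF \<phi>(1)] that permutes_inverses(2)[OF \<phi>(1)]
    by (rule map_permutation_compose_inv)
  then have "s = map_permutation {0..<m} (inv \<phi>) s'" "a = map_permutation {0..<m} (inv \<phi>) a'"
    using perm s' a' by simp_all
  ultimately show ?thesis
    unfolding map_iso_iff_relabel[OF perm] using \<open>m' = m\<close> by blast
qed

lemma map_iso_trans:
  assumes "rooted_map (m', s', a')" "rooted_map (m'', s'', a'')"
    and "map_iso (m, s, a) (m', s', a')" "map_iso (m', s', a') (m'', s'', a'')"
  shows "map_iso (m, s, a) (m'', s'', a'')"
proof -
  obtain \<phi> \<psi> where "\<phi> \<in> root_fixing_perms m" "\<psi> \<in> root_fixing_perms m" "m' = m" "m'' = m"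
    and s'': "s'' = map_permutation {0..<m} \<psi> (map_permutation {0..<m} \<phi> s)"
    and a'': "a'' = map_permutation {0..<m} \<psi> (map_permutation {0..<m} \<phi> a)"
    using assms(3,4)
    unfolding map_iso_iff_relabel[OF rooted_map_permutes[OF assms(1)]]
      map_iso_iff_relabel[OF rooted_map_permutes[OF assms(2)]]
    by blast
  then have \<phi>: "\<phi> permutes {0..<m}" and \<psi>: "\<psi> permutes {0..<m}"
    by (auto simp: root_fixing_perms_def)
  have "\<psi> \<circ> \<phi> \<in> root_fixing_perms m"
    using \<open>\<phi> \<in> root_fixing_perms m\<close> \<open>\<psi> \<in> root_fixing_perms m\<close> permutes_compose
    by (auto simp: root_fixing_perms_def)
  moreover have "map_permutation {0..<m} \<psi> (map_permutation {0..<m} \<phi> p) =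
      map_permutation {0..<m} (\<psi> \<circ> \<phi>) p" for p
    using permutes_imp_bij[OF \<phi>] permutes_inj_on[OF \<psi>] by (rule map_permutation_compose)
  ultimately show ?thesis
    unfolding map_iso_iff_relabel[OF rooted_map_permutes[OF assms(2)]]
    using s'' a'' \<open>m'' = m\<close> by auto
qed

lemma equiv_map_iso:
  assumes "\<And>M. M \<in> S \<Longrightarrow> rooted_map M"
  shows "equiv S {(M, M'). M \<in> S \<and> M' \<in> S \<and> map_iso M M'}"
proof (rule equivI)
  show "refl_on S {(M, M'). M \<in> S \<and> M' \<in> S \<and> map_iso M M'}"
    using assms map_iso_refl by (auto simp: refl_on_def)
  show "sym {(M, M'). M \<in> S \<and> M' \<in> S \<and> map_iso M M'}"
    using assms map_iso_sym by (auto simp: sym_def)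
  show "trans {(M, M'). M \<in> S \<and> M' \<in> S \<and> map_iso M M'}"
    using assms map_iso_trans unfolding trans_def by fastforce
qed auto

lemma inj_on_relabel_rooted_map:
  assumes sa: "(s, a) \<in> rooted_maps A" and "0 \<in> A"
  shows "inj_on (\<lambda>\<phi>. (map_permutation A \<phi> s, map_permutation A \<phi> a)) {\<phi>. \<phi> permutes A \<and> \<phi> 0 = 0}"
proof (rule inj_onI)
  fix \<phi> \<psi>
  assume "\<phi> \<in> {\<phi>. \<phi> permutes A \<and> \<phi> 0 = 0}" "\<psi> \<in> {\<phi>. \<phi> permutes A \<and> \<phi> 0 = 0}"
    and eq: "(map_permutation A \<phi> s, map_permutation A \<phi> a) = (map_permutation A \<psi> s, map_permutation A \<psi> a)"
  then have \<phi>: "\<phi> permutes A" "\<phi> 0 = 0" and \<psi>: "\<psi> permutes A" "\<psi> 0 = 0" by auto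
  let ?s = "map_permutation A \<phi> s" and ?a = "map_permutation A \<phi> a"
  have s: "s permutes A" and conn: "premap_connected A s a"
    using sa by (auto simp: rooted_maps_def rooted_premaps_def)
  have "?s permutes A" using map_permutation_permutes[OF permutes_imp_bij[OF \<phi>(1)] s] .
  have \<phi>_comm: "\<phi> (s x) = ?s (\<phi> x)" "\<phi> (a x) = ?a (\<phi> x)" if "x \<in> A" for x
    using map_permutation_apply[OF permutes_inj_on[OF \<phi>(1)] that] by simp_all
  have \<psi>_comm: "\<psi> (s x) = ?s (\<psi> x)" "\<psi> (a x) = ?a (\<psi> x)" if "x \<in> A" for x
    using map_permutation_apply[OF permutes_inj_on[OF \<psi>(1)] that] eq by simp_all
  have "\<phi> y = \<psi> y" if "(0, y) \<in> (premap_rel A s a)\<^sup>*" for y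
    using that
  proof (induction rule: rtrancl_induct)
    case (step y z)
    from step(2) show ?case
    proof (cases rule: premap_rel_cases)
      case (2 w)
      then have "?s (\<phi> w) = ?s (\<psi> w)" using \<phi>_comm \<psi>_comm step(3) by metis
      then show ?thesis using 2 permutes_inj[OF \<open>?s permutes A\<close>] by (simp add: inj_eq)
    qed (use \<phi>_comm \<psi>_comm step(3) in metis)+
  qed (simp add: \<phi> \<psi>)
  moreover have "(0, y) \<in> (premap_rel A s a)\<^sup>*" if "y \<in> A" for y
    using conn that \<open>0 \<in> A\<close> by (simp add: premap_connected_def)
  ultimately show "\<phi> = \<psi>"
    using permutes_not_in[OF \<phi>(1)] permutes_not_in[OF \<psi>(1)] by (metis ext)
qed

lemma card_quotient_uniform:
  assumes "finite A" "equiv A r" "\<And>X. X \<in> A // r \<Longrightarrow> card X = k"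
  shows "k * card (A // r) = card A"
proof -
  have "k * card (A // r) = card (\<Union>(A // r))"
  proof (rule card_partition)
    show "finite (A // r)"
      using assms(1,2) by (intro finite_quotient) (auto dest: equiv_type)
    show "finite (\<Union>(A // r))" using Union_quotient[OF assms(2)] assms(1) by simp
  qed (use assms(3) quotient_disj[OF assms(2)] in auto)
  then show ?thesis using Union_quotient[OF assms(2)] by simp
qed

lemma closed_map_iso_class:
  assumes "1 \<le> n" and sa: "(s, a) \<in> rooted_maps {0..<2*n - 1}"
  shows "{M'. M' \<in> closed_maps_of_size n \<and> map_iso (2*n - 1, s, a) M'} =
    (\<lambda>\<phi>. (2*n - 1, map_permutation {0..<2*n - 1} \<phi> s, map_permutation {0..<2*n - 1} \<phi> a))
      ` root_fixing_perms (2*n - 1)"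
proof (intro equalityI subsetI)
  let ?A = "{0..<2*n - 1}"
  fix M' assume "M' \<in> {M'. M' \<in> closed_maps_of_size n \<and> map_iso (2*n - 1, s, a) M'}"
  then obtain s' a' where M': "M' = (2*n - 1, s', a')" "(s', a') \<in> rooted_maps ?A"
    and iso: "map_iso (2*n - 1, s, a) (2*n - 1, s', a')"
    using closed_maps_of_size_eq[OF assms(1)] by auto
  then have "s' permutes ?A" "a' permutes ?A"
    using rooted_premapsD by (auto simp: rooted_maps_def)
  then show "M' \<in> (\<lambda>\<phi>. (2*n - 1, map_permutation ?A \<phi> s, map_permutation ?A \<phi> a))
      ` root_fixing_perms (2*n - 1)"
    using iso M'(1) by (auto simp: map_iso_iff_relabel)
next
  let ?A = "{0..<2*n - 1}"
  fix M' assume "M' \<in> (\<lambda>\<phi>. (2*n - 1, map_permutation ?A \<phi> s, map_permutation ?A \<phi> a))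
      ` root_fixing_perms (2*n - 1)"
  then obtain \<phi> where \<phi>: "\<phi> permutes ?A" "\<phi> 0 = 0"
    and M': "M' = (2*n - 1, map_permutation ?A \<phi> s, map_permutation ?A \<phi> a)"
    by (auto simp: root_fixing_perms_def)
  have "0 \<in> ?A" using assms(1) by simp
  have relabelled: "(map_permutation ?A \<phi> s, map_permutation ?A \<phi> a) \<in> rooted_maps ?A"
    using rooted_map_map_permutation[OF permutes_imp_bij[OF \<phi>(1)] \<open>0 \<in> ?A\<close> \<phi>(2) sa] .
  then have "map_permutation ?A \<phi> s permutes ?A" "map_permutation ?A \<phi> a permutes ?A"
    using rooted_premapsD by (auto simp: rooted_maps_def)
  then have "map_iso (2*n - 1, s, a) M'"
    using \<phi> by (auto simp: M' map_iso_iff_relabel root_fixing_perms_def)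
  moreover have "M' \<in> closed_maps_of_size n"
    using relabelled closed_maps_of_size_eq[OF assms(1)] M' by auto
  ultimately show "M' \<in> {M'. M' \<in> closed_maps_of_size n \<and> map_iso (2*n - 1, s, a) M'}"
    by simp
qed

lemma card_rooted_maps_eq_g_count:
  assumes "1 \<le> n"
  shows "card (rooted_maps {0..<2*n - 1}) = g_count n * fact (2*n - 2)"
proof -
  let ?m = "2*n - 1" and ?A = "{0..<2*n - 1}" and ?S = "closed_maps_of_size n"
  let ?R = "{(M, M'). M \<in> ?S \<and> M' \<in> ?S \<and> map_iso M M'}"
  have S: "?S = (\<lambda>(s, a). (?m, s, a)) ` rooted_maps ?A"
    by (rule closed_maps_of_size_eq[OF assms])
  have "inj_on (\<lambda>(s, a). (?m, s, a)) (rooted_maps ?A)" by (auto simp: inj_on_def)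
  then have card_S: "card ?S = card (rooted_maps ?A)"
    using S card_image by metis
  have equiv: "equiv ?S ?R"
    by (rule equiv_map_iso) (simp add: closed_maps_of_size_def)
  have "card X = fact (2*n - 2)" if "X \<in> ?S // ?R" for X
  proof -
    from that obtain M where X: "X = ?R `` {M}" and "M \<in> ?S" by (rule quotientE)
    then obtain s a where M: "M = (?m, s, a)" and sa: "(s, a) \<in> rooted_maps ?A" using S by auto
    have "X = (\<lambda>\<phi>. (?m, map_permutation ?A \<phi> s, map_permutation ?A \<phi> a)) ` root_fixing_perms ?m"
      using closed_map_iso_class[OF assms sa] \<open>M \<in> ?S\<close> by (auto simp: X M)
    moreover have "inj_on (\<lambda>\<phi>. (?m, map_permutation ?A \<phi> s, map_permutation ?A \<phi> a))
        (root_fixing_perms ?m)"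
      using inj_on_relabel_rooted_map[OF sa] assms unfolding root_fixing_perms_def inj_on_def by auto
    ultimately have "card X = card (root_fixing_perms ?m)" by (simp add: card_image)
    then show ?thesis using card_root_fixing_perms[of ?m] assms by (simp add: numeral_2_eq_2)
  qed
  then have "fact (2*n - 2) * card (?S // ?R) = card ?S"
    using card_quotient_uniform[OF _ equiv] S finite_rooted_maps[of ?A] by simp
  then show ?thesis using card_S by (simp add: g_count_def mult.commute)
qed

lemma card_rooted_premaps:
  "finite A \<Longrightarrow> 0 \<in> A \<Longrightarrow> card (rooted_premaps A) = fact (card A) * matching_count (card A - 1)"
  by (simp add: rooted_premaps_def card_cartesian_product card_permutations card_perfect_matchings)

lemma card_premaps: "finite D \<Longrightarrow> card (premaps D) = fact (card D) * matching_count (card D)"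
  by (simp add: premaps_def card_cartesian_product card_permutations card_perfect_matchings)

lemma sum_Pow_by_card:
  assumes "finite B"
  shows "(\<Sum>C\<in>Pow B. f (card C)) = (\<Sum>j=0..card B. (card B choose j) * f j)"
proof -
  have "(\<Sum>C\<in>Pow B. f (card C)) = (\<Sum>j=0..card B. \<Sum>C\<in>{C. C \<in> Pow B \<and> card C = j}. f (card C))"
    by (rule sum.group[symmetric]) (use assms in \<open>auto intro: card_mono\<close>)
  also have "\<dots> = (\<Sum>j=0..card B. (card B choose j) * f j)"
  proof (rule sum.cong[OF refl])
    fix j
    have "(\<Sum>C\<in>{C. C \<in> Pow B \<and> card C = j}. f (card C)) = card {C. C \<subseteq> B \<and> card C = j} * f j"
      by simp
    also have "\<dots> = (card B choose j) * f j" using n_subsets[OF assms] by simp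
    finally show "(\<Sum>C\<in>{C. C \<in> Pow B \<and> card C = j}. f (card C)) = (card B choose j) * f j" .
  qed
  finally show ?thesis .
qed

lemma sum_even_terms:
  fixes f :: "nat \<Rightarrow> 'a::comm_monoid_add"
  assumes "\<And>j. odd j \<Longrightarrow> f j = 0"
  shows "(\<Sum>j=0..2*N. f j) = (\<Sum>i=0..N. f (2*i))"
proof (induction N)
  case (Suc N)
  have "(\<Sum>j=0..2*Suc N. f j) = (\<Sum>j=0..2*N. f j) + f (2*N + 1) + f (2*N + 2)"
    by (simp add: numeral_2_eq_2 add.assoc)
  then show ?case using Suc assms[of "2*N + 1"] by simp
qed simp

text \<open>Counting rooted premaps on \<open>A\<close> by the size \<open>j + 1\<close> of the connected component of the root.\<close>

lemma rooted_premaps_convolution: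
  fixes A :: "nat set"
  assumes "finite A" "0 \<in> A"
  defines "c \<equiv> card A - 1"
  shows "fact (c + 1) * matching_count c =
    (\<Sum>j=0..c. (c choose j) * (card (rooted_maps {0..<j + 1}) * (fact (c - j) * matching_count (c - j))))"
proof -
  let ?B = "A - {0}"
  have "0 < card A" using assms(1,2) card_gt_0_iff by blast
  then have cB: "card ?B = c" "card A = c + 1"
    using assms by simp_all
  have "fact (c + 1) * matching_count c = card (rooted_premaps A)"
    using card_rooted_premaps[OF assms(1,2)] cB by simp
  also have "\<dots> = (\<Sum>C | C \<subseteq> A \<and> 0 \<in> C. card (rooted_maps C) * card (premaps (A - C)))"
    by (rule card_rooted_premaps_decomposition[OF assms(1,2)])
  also have "\<dots> = (\<Sum>C\<in>Pow ?B. card (rooted_maps (insert 0 C)) * card (premaps (A - insert 0 C)))"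
    by (rule sum.reindex_bij_witness[of _ "\<lambda>C. insert 0 C" "\<lambda>C. C - {0}"])
       (use assms(2) in \<open>auto simp: insert_absorb\<close>)
  also have "\<dots> = (\<Sum>C\<in>Pow ?B. card (rooted_maps {0..<card C + 1}) *
      (fact (c - card C) * matching_count (c - card C)))"
  proof (rule sum.cong[OF refl])
    fix C assume "C \<in> Pow ?B"
    then have C: "C \<subseteq> ?B" "finite C" "0 \<notin> C"
      using assms(1) finite_subset[of C A] by auto
    then have "card (A - insert 0 C) = c - card C"
      using assms(1,2) cB by (subst card_Diff_subset) auto
    then show "card (rooted_maps (insert 0 C)) * card (premaps (A - insert 0 C)) =
        card (rooted_maps {0..<card C + 1}) * (fact (c - card C) * matching_count (c - card C))"
      using card_rooted_maps[of "insert 0 C"] card_premaps[of "A - insert 0 C"] C assms(1) by simp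
  qed
  also have "\<dots> = (\<Sum>j=0..c. (c choose j) *
      (card (rooted_maps {0..<j + 1}) * (fact (c - j) * matching_count (c - j))))"
    using sum_Pow_by_card[of ?B] assms(1) cB by simp
  finally show ?thesis .
qed

lemma odd_dfact_eq_sum_g_count:
  assumes "1 \<le> n"
  shows "odd_dfact n = (\<Sum>k=1..n. g_count k * odd_dfact (n - k))"
proof -
  obtain N where n: "n = Suc N" using assms by (cases n) auto
  have "fact (2*N + 1) * matching_count (2*N) =
      (\<Sum>j=0..2*N. (2*N choose j) * (card (rooted_maps {0..<j + 1}) * (fact (2*N - j) * matching_count (2*N - j))))"
    using rooted_premaps_convolution[of "{0..<2*N + 1}"] by simp
  also have "\<dots> = (\<Sum>i=0..N. (2*N choose (2*i)) *
      (card (rooted_maps {0..<2*i + 1}) * (fact (2*N - 2*i) * matching_count (2*N - 2*i))))"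
  proof (rule sum_even_terms)
    fix j :: nat assume "odd j"
    then have "odd (2*N - j) \<or> 2*N < j" by presburger
    then show "(2*N choose j) * (card (rooted_maps {0..<j + 1}) * (fact (2*N - j) * matching_count (2*N - j))) = 0"
      by (auto simp: matching_count_def)
  qed
  also have "\<dots> = (\<Sum>i=0..N. fact (2*N) * (g_count (i + 1) * odd_dfact (N - i)))"
  proof (rule sum.cong[OF refl])
    fix i assume "i \<in> {0..N}"
    then have "fact (2*i) * fact (2*N - 2*i) * (2*N choose (2*i)) = (fact (2*N) :: nat)"
      by (intro binomial_fact_lemma) simp
    moreover have "card (rooted_maps {0..<2*i + 1}) = g_count (i + 1) * fact (2*i)"
      using card_rooted_maps_eq_g_count[of "i + 1"] by simp
    moreover have "matching_count (2*N - 2*i) = odd_dfact (N - i)"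
      by (simp add: matching_count_def flip: diff_mult_distrib2)
    ultimately show "(2*N choose (2*i)) *
        (card (rooted_maps {0..<2*i + 1}) * (fact (2*N - 2*i) * matching_count (2*N - 2*i))) =
        fact (2*N) * (g_count (i + 1) * odd_dfact (N - i))"
      by (metis (no_types, lifting) mult.assoc mult.commute mult.left_commute)
  qed
  finally have "fact (2*N) * odd_dfact (Suc N) = fact (2*N) * (\<Sum>i=0..N. g_count (i + 1) * odd_dfact (N - i))"
    by (simp add: sum_distrib_left matching_count_def algebra_simps)
  then have "odd_dfact (Suc N) = (\<Sum>i=0..N. g_count (i + 1) * odd_dfact (N - i))"
    by simp
  also have "\<dots> = (\<Sum>k=1..Suc N. g_count k * odd_dfact (Suc N - k))"
    using sum.shift_bounds_cl_Suc_ivl[of "\<lambda>k. g_count k * odd_dfact (Suc N - k)" 0 N] by simp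
  finally show ?thesis using n by simp
qed

theorem proposition2p2:
  shows "b_count 1 = 1 \<and> g_count 1 = 1 \<and>
    (\<forall>n\<ge>2. b_count n = (\<Sum>k=1..n-1. b_count k * b_count (n-k)) + (2*n-3) * b_count (n-1)) \<and>
    (\<forall>n\<ge>2. g_count n = (\<Sum>k=1..n-1. g_count k * g_count (n-k)) + (2*n-3) * g_count (n-1))"
  using recurrence_of_odd_dfact_convolution[OF odd_dfact_eq_sum_b_count]
    recurrence_of_odd_dfact_convolution[OF odd_dfact_eq_sum_g_count]
  by blast

end
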